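(* Let $\mathbb{K}$ be a field and let $\mathcal F=\{f_n(q)\}_{n=1}^\infty$ be a nonzero solution (i.e. $f_n\neq 0$ for some $n$) of the functional equation $f_{mn}(q)=f_m(q)f_n(q^m)$ for all $m,n\in\mathbb N$, with $f_n(q)\in\mathbb{K}[q]$. Then: (i) $f_1(q)=1$; (ii) $f_m(q)f_n(q^m)=f_n(q)f_m(q^n)$ for all $m,n\in\mathbb N$; (iii) writing each $f_n$ with $n\in\mathrm{supp}(\mathcal F)$ uniquely as $f_n(q)=a(n)q^{v(f_n)}g_n(q)$ with $a(n)\in\mathbb{K}\setminus\{0\}$, $v(f_n)\in\mathbb N_0$ and $g_n(q)\in\mathbb{K}[q]$ with $g_n(0)=1$, and setting $a(n)=0$, $g_n(q)=0$ for $n\notin\mathrm{supp}(\mathcal F)$, one has $a(mn)=a(m)a(n)$ for all $m,n\in\mathrm{supp}(\mathcal F)$; there is a nonnegative rational number $t$ with $v(f_n)=t(n-1)$ for all $n\in\mathrm{supp}(\mathcal F)$; and $\mathcal G=\{g_n(q)\}_{n=1}^\infty$ is again a solution of the same functional equation with $\mathrm{supp}(\mathcal G)=\mathrm{supp}(\mathcal F)$; (iv) there is a nonnegative rational number $s$ with $\deg(f_n)=s(n-1)$ for all $n\in\mathrm{supp}(\mathcal F)$.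
   Context: $\mathbb N=\{1,2,3,\dots\}$, $\mathbb N_0=\mathbb N\cup\{0\}$. $\mathrm{supp}(\mathcal F)=\{n\in\mathbb N: f_n(q)\ne0\}$. For a nonzero polynomial $f$, $v(f)$ is the smallest exponent of $q$ occurring in $f$ with nonzero coefficient. *)

theory Defs
  imports "HOL-Computational_Algebra.Polynomial"
begin

text \<open>A family F = (f_n) for n in N = {1,2,...} is modelled as a function nat => 'a poly;
  the value at 0 is irrelevant. Substitution q -> q^m is composition with the monomial q^m.\<close>

definition subst_pow :: "'a::comm_semiring_1 poly \<Rightarrow> nat \<Rightarrow> 'a poly" where
  "subst_pow p m = pcompose p (monom 1 m)"

definition is_solution :: "(nat \<Rightarrow> 'a::comm_semiring_1 poly) \<Rightarrow> bool" where
  "is_solution f \<longleftrightarrow> (\<forall>m n. m \<ge> 1 \<longrightarrow> n \<ge> 1 \<longrightarrow> f (m * n) = f m * subst_pow (f n) m)"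

definition supp :: "(nat \<Rightarrow> 'a::zero poly) \<Rightarrow> nat set" where
  "supp f = {n. n \<ge> 1 \<and> f n \<noteq> 0}"

definition vq :: "'a::zero poly \<Rightarrow> nat" where
  "vq p = (LEAST i. coeff p i \<noteq> 0)"

definition acoef :: "(nat \<Rightarrow> 'a::field poly) \<Rightarrow> nat \<Rightarrow> 'a" where
  "acoef f n = (if n \<in> supp f then coeff (f n) (vq (f n)) else 0)"

text \<open>g_n(q) = f_n(q) / (a(n) q^{v(f_n)}); 0 outside the support.\<close>
definition gpart :: "(nat \<Rightarrow> 'a::field poly) \<Rightarrow> nat \<Rightarrow> 'a poly" where
  "gpart f n = (if n \<in> supp f
      then smult (inverse (acoef f n)) (Poly (drop (vq (f n)) (coeffs (f n)))) else 0)"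

end

theory Submission
  imports Defs
begin

(* Every nonzero polynomial factors uniquely as p = q^(vq p) * r with r(0) nonzero. As q -> q^m
   fixes constant terms and preserves this shape, uniqueness splits the functional equation into
   three: the r's form a solution again, their constant terms a(n) are multiplicative, and the
   valuations satisfy v(mn) = v(m) + m v(n), as do the degrees. Comparing v(mn) with v(nm) gives
   v(m) (n - 1) = v(n) (m - 1), so v is proportional to n - 1. *)

definition strip_vq :: "'a::zero poly \<Rightarrow> 'a poly" where
  "strip_vq p = poly_shift (vq p) p"

lemma coeff_vq_nonzero: "p \<noteq> 0 \<Longrightarrow> coeff p (vq p) \<noteq> 0"
  unfolding vq_def by (rule LeastI_ex) (meson leading_coeff_0_iff)

lemma coeff_less_vq: "i < vq p \<Longrightarrow> coeff p i = 0"
  unfolding vq_def using not_less_Least by blast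

lemma coeff_0_strip_vq: "coeff (strip_vq p) 0 = coeff p (vq p)"
  by (simp add: strip_vq_def coeff_poly_shift)

lemma monom_vq_mult_strip_vq: "monom 1 (vq p) * strip_vq p = (p::'a::comm_semiring_1 poly)"
  by (rule poly_eqI) (auto simp: coeff_monom_mult strip_vq_def coeff_poly_shift coeff_less_vq)

lemma vq_strip_vq_unique:
  fixes r :: "'a::comm_semiring_1 poly"
  assumes p: "p = monom 1 k * r" and r0: "coeff r 0 \<noteq> 0"
  shows "vq p = k" and "strip_vq p = r"
proof -
  have coeff_p: "coeff p i = (if i < k then 0 else coeff r (i - k))" for i
    using p by (simp add: coeff_monom_mult)
  show "vq p = k"
    unfolding vq_def by (rule Least_equality) (use coeff_p r0 in \<open>auto, metis not_less\<close>)
  then show "strip_vq p = r"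
    by (intro poly_eqI) (simp add: strip_vq_def coeff_poly_shift coeff_p)
qed

lemma vq_strip_vq_mult:
  fixes p q :: "'a::idom poly"
  assumes "p \<noteq> 0" "q \<noteq> 0"
  shows "vq (p * q) = vq p + vq q" and "strip_vq (p * q) = strip_vq p * strip_vq q"
proof -
  have "p * q = (monom 1 (vq p) * strip_vq p) * (monom 1 (vq q) * strip_vq q)"
    by (simp only: monom_vq_mult_strip_vq)
  also have "\<dots> = monom 1 (vq p + vq q) * (strip_vq p * strip_vq q)"
    by (simp add: mult_monom mult_ac)
  finally have "p * q = monom 1 (vq p + vq q) * (strip_vq p * strip_vq q)" .
  moreover have "coeff (strip_vq p * strip_vq q) 0 \<noteq> 0"
    using assms by (simp add: coeff_mult_0 coeff_0_strip_vq coeff_vq_nonzero)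
  ultimately show "vq (p * q) = vq p + vq q" and "strip_vq (p * q) = strip_vq p * strip_vq q"
    by (rule vq_strip_vq_unique)+
qed

lemma subst_pow_mult: "subst_pow (p * q) m = subst_pow p m * subst_pow q m"
  by (simp add: subst_pow_def pcompose_mult)

lemma subst_pow_smult: "subst_pow (smult a p) m = smult a (subst_pow p m)"
  by (simp add: subst_pow_def pcompose_smult)

lemma subst_pow_1: "subst_pow p 1 = p"
  by (simp add: subst_pow_def monom_altdef)

lemma subst_pow_monom: "subst_pow (monom 1 k) m = (monom 1 (m * k) :: 'a::comm_semiring_1 poly)"
proof -
  have "pcompose ([:0, 1:] ^ k) q = q ^ k" for q :: "'a poly"
    by (induct k) (simp_all add: pcompose_mult pcompose_1 pcompose_pCons)
  then show ?thesis
    by (simp add: subst_pow_def monom_altdef monom_power power_mult[symmetric] mult.commute)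
qed

lemma coeff_0_subst_pow: "m \<ge> 1 \<Longrightarrow> coeff (subst_pow p m) 0 = coeff p 0"
  by (simp add: subst_pow_def poly_0_coeff_0)

lemma degree_subst_pow:
  "m \<ge> 1 \<Longrightarrow> degree (subst_pow p m) = m * degree (p::'a::idom poly)"
  by (simp add: subst_pow_def degree_pcompose degree_monom_eq)

lemma subst_pow_eq_0_iff: "m \<ge> 1 \<Longrightarrow> subst_pow p m = 0 \<longleftrightarrow> (p::'a::idom poly) = 0"
  by (simp add: subst_pow_def pcompose_eq_0_iff degree_monom_eq)

lemma vq_strip_vq_subst_pow:
  fixes q :: "'a::comm_semiring_1 poly"
  assumes "q \<noteq> 0" "m \<ge> 1"
  shows "vq (subst_pow q m) = m * vq q" and "strip_vq (subst_pow q m) = subst_pow (strip_vq q) m"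
proof -
  have "subst_pow q m = subst_pow (monom 1 (vq q) * strip_vq q) m"
    by (simp only: monom_vq_mult_strip_vq)
  also have "\<dots> = monom 1 (m * vq q) * subst_pow (strip_vq q) m"
    by (simp add: subst_pow_mult subst_pow_monom)
  finally have "subst_pow q m = monom 1 (m * vq q) * subst_pow (strip_vq q) m" .
  moreover have "coeff (subst_pow (strip_vq q) m) 0 \<noteq> 0"
    using assms by (simp add: coeff_0_subst_pow coeff_0_strip_vq coeff_vq_nonzero)
  ultimately show "vq (subst_pow q m) = m * vq q"
    and "strip_vq (subst_pow q m) = subst_pow (strip_vq q) m"
    by (rule vq_strip_vq_unique)+
qed

lemma twisted_additive_eq_rat_mult_pred:
  fixes V :: "nat \<Rightarrow> nat"
  assumes pos: "\<And>n. n \<in> S \<Longrightarrow> n \<ge> 1"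
    and twisted: "\<And>m n. m \<in> S \<Longrightarrow> n \<in> S \<Longrightarrow> V (m * n) = V m + m * V n"
  shows "\<exists>t::rat. t \<ge> 0 \<and> (\<forall>n\<in>S. of_nat (V n) = t * (of_nat n - 1))"
proof (cases "\<exists>n0\<in>S. n0 \<noteq> 1")
  case True
  then obtain n0 where n0: "n0 \<in> S" "n0 \<noteq> 1" by blast
  have n0_pos: "(of_nat n0 - 1 :: rat) > 0"
    using n0 pos[of n0] by simp
  define t where "t = (of_nat (V n0) :: rat) / (of_nat n0 - 1)"
  have "t \<ge> 0"
    using n0_pos by (simp add: t_def)
  moreover have "\<forall>n\<in>S. of_nat (V n) = t * (of_nat n - 1)"
  proof
    fix n
    assume n: "n \<in> S"
    have "V n + n * V n0 = V n0 + n0 * V n"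
      using twisted[OF n n0(1)] twisted[OF n0(1) n] by (simp add: mult.commute)
    then have "of_nat (V n + n * V n0) = (of_nat (V n0 + n0 * V n) :: rat)"
      by (rule arg_cong)
    then have "of_nat (V n) * (of_nat n0 - 1) = (of_nat (V n0) * (of_nat n - 1) :: rat)"
      by (simp add: algebra_simps)
    then have "of_nat (V n) = of_nat (V n0) * (of_nat n - 1) / (of_nat n0 - 1 :: rat)"
      using n0_pos by (simp add: eq_divide_eq)
    then show "of_nat (V n) = t * (of_nat n - 1)"
      by (simp add: t_def)
  qed
  ultimately show ?thesis by blast
next
  case False
  show ?thesis
  proof (intro exI[of _ 0] conjI ballI)
    fix n
    assume n: "n \<in> S"
    with False have "n = 1" by blast
    with twisted[OF n n] show "of_nat (V n) = (0::rat) * (of_nat n - 1)" by simp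
  qed simp
qed

lemma is_solutionD: "is_solution f \<Longrightarrow> m \<ge> 1 \<Longrightarrow> n \<ge> 1 \<Longrightarrow> f (m * n) = f m * subst_pow (f n) m"
  by (simp add: is_solution_def)

lemma solution_1:
  fixes f :: "nat \<Rightarrow> 'a::idom poly"
  assumes "is_solution f" "n \<ge> 1" "f n \<noteq> 0"
  shows "f 1 = 1"
proof -
  have "f (1 * n) = f 1 * subst_pow (f n) 1"
    using assms(1,2) by (rule is_solutionD[OF _ order_refl])
  then have "f 1 * f n = 1 * f n"
    by (metis mult_1 subst_pow_1)
  with assms(3) show ?thesis by simp
qed

lemma solution_commute:
  "is_solution f \<Longrightarrow> m \<ge> 1 \<Longrightarrow> n \<ge> 1 \<Longrightarrow> f m * subst_pow (f n) m = f n * subst_pow (f m) n"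
  by (metis is_solutionD mult.commute)

lemma supp_solution_mult:
  fixes f :: "nat \<Rightarrow> 'a::idom poly"
  assumes "is_solution f" "m \<in> supp f" "n \<in> supp f"
  shows "m * n \<in> supp f"
  using assms by (auto simp: supp_def is_solutionD subst_pow_eq_0_iff)

context
  fixes f :: "nat \<Rightarrow> 'a::idom poly"
  assumes sol: "is_solution f"
begin

lemma solution_vq_mult:
  "m \<in> supp f \<Longrightarrow> n \<in> supp f \<Longrightarrow> vq (f (m * n)) = vq (f m) + m * vq (f n)"
  by (simp add: supp_def is_solutionD[OF sol] vq_strip_vq_mult vq_strip_vq_subst_pow
      subst_pow_eq_0_iff)

lemma solution_strip_vq_mult:
  "m \<in> supp f \<Longrightarrow> n \<in> supp f \<Longrightarrow>
    strip_vq (f (m * n)) = strip_vq (f m) * subst_pow (strip_vq (f n)) m"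
  by (simp add: supp_def is_solutionD[OF sol] vq_strip_vq_mult vq_strip_vq_subst_pow
      subst_pow_eq_0_iff)

lemma solution_degree_mult:
  "m \<in> supp f \<Longrightarrow> n \<in> supp f \<Longrightarrow> degree (f (m * n)) = degree (f m) + m * degree (f n)"
  by (simp add: supp_def is_solutionD[OF sol] degree_mult_eq degree_subst_pow subst_pow_eq_0_iff)

end

lemma acoef_eq_coeff_0_strip_vq: "n \<in> supp f \<Longrightarrow> acoef f n = coeff (strip_vq (f n)) 0"
  by (simp add: acoef_def coeff_0_strip_vq)

lemma gpart_eq_smult_strip_vq:
  "n \<in> supp f \<Longrightarrow> gpart f n = smult (inverse (acoef f n)) (strip_vq (f n))"
  by (simp add: gpart_def strip_vq_def coeffs_shift_poly[symmetric])

lemma acoef_gpart_factorization: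
  assumes n: "n \<in> supp f"
  shows "acoef f n \<noteq> 0 \<and> poly (gpart f n) 0 = 1 \<and>
    f n = smult (acoef f n) (monom 1 (vq (f n)) * gpart f n)"
proof -
  have "acoef f n \<noteq> 0"
    using n by (simp add: acoef_def supp_def coeff_vq_nonzero)
  then show ?thesis
    using n monom_vq_mult_strip_vq[of "f n"]
    by (simp add: gpart_eq_smult_strip_vq acoef_eq_coeff_0_strip_vq poly_0_coeff_0)
qed

lemma supp_gpart: "supp (gpart f) = supp f"
proof
  show "supp (gpart f) \<subseteq> supp f"
    by (auto simp: supp_def gpart_def)
  show "supp f \<subseteq> supp (gpart f)"
  proof
    fix n
    assume n: "n \<in> supp f"
    then have "gpart f n \<noteq> 0"
      using acoef_gpart_factorization[OF n] by auto
    with n show "n \<in> supp (gpart f)"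
      by (simp add: supp_def)
  qed
qed

lemma solution_acoef_mult:
  assumes "is_solution f" "m \<in> supp f" "n \<in> supp f"
  shows "acoef f (m * n) = acoef f m * acoef f n"
  using assms supp_solution_mult[OF assms]
  by (simp add: acoef_eq_coeff_0_strip_vq solution_strip_vq_mult coeff_mult_0 coeff_0_subst_pow
      supp_def)

lemma is_solution_gpart:
  assumes sol: "is_solution f"
  shows "is_solution (gpart f)"
  unfolding is_solution_def
proof (intro allI impI)
  fix m n :: nat
  assume m: "m \<ge> 1" and n: "n \<ge> 1"
  show "gpart f (m * n) = gpart f m * subst_pow (gpart f n) m"
  proof (cases "m \<in> supp f \<and> n \<in> supp f")
    case True
    then show ?thesis
      using supp_solution_mult[OF sol] solution_acoef_mult[OF sol]
      by (simp add: gpart_eq_smult_strip_vq solution_strip_vq_mult[OF sol] subst_pow_smult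
          mult_ac)
  next
    case False
    then have "m * n \<notin> supp f"
      using m n by (auto simp: supp_def is_solutionD[OF sol] subst_pow_def)
    with False show ?thesis
      by (auto simp: gpart_def subst_pow_def)
  qed
qed

theorem mainTheorem7:
  fixes f :: "nat \<Rightarrow> 'a::field poly"
  assumes sol: "is_solution f"
    and nonzero: "\<exists>n\<ge>1. f n \<noteq> 0"
  shows "f 1 = 1 \<and>
    (\<forall>m n. m \<ge> 1 \<longrightarrow> n \<ge> 1 \<longrightarrow>
           f m * subst_pow (f n) m = f n * subst_pow (f m) n) \<and>
    (\<forall>n\<in>supp f. acoef f n \<noteq> 0 \<and> poly (gpart f n) 0 = 1 \<and>
           f n = smult (acoef f n) (monom 1 (vq (f n)) * gpart f n)) \<and>
    (\<forall>m\<in>supp f. \<forall>n\<in>supp f. acoef f (m * n) = acoef f m * acoef f n) \<and>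
    (\<exists>t::rat. t \<ge> 0 \<and> (\<forall>n\<in>supp f. of_nat (vq (f n)) = t * (of_nat n - 1))) \<and>
    (is_solution (gpart f)) \<and>
    (supp (gpart f) = supp f) \<and>
    (\<exists>s::rat. s \<ge> 0 \<and> (\<forall>n\<in>supp f. of_nat (degree (f n)) = s * (of_nat n - 1)))"
proof -
  have supp_pos: "\<And>n. n \<in> supp f \<Longrightarrow> n \<ge> 1"
    by (simp add: supp_def)
  have "\<exists>t::rat. t \<ge> 0 \<and> (\<forall>n\<in>supp f. of_nat (vq (f n)) = t * (of_nat n - 1))"
    using supp_pos solution_vq_mult[OF sol]
    by (rule twisted_additive_eq_rat_mult_pred[where V = "\<lambda>n. vq (f n)"])
  moreover have "\<exists>s::rat. s \<ge> 0 \<and> (\<forall>n\<in>supp f. of_nat (degree (f n)) = s * (of_nat n - 1))"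
    using supp_pos solution_degree_mult[OF sol]
    by (rule twisted_additive_eq_rat_mult_pred[where V = "\<lambda>n. degree (f n)"])
  moreover have "f 1 = 1"
    using nonzero solution_1[OF sol] by blast
  ultimately show ?thesis
    using solution_commute[OF sol] acoef_gpart_factorization solution_acoef_mult[OF sol]
      is_solution_gpart[OF sol] supp_gpart by blast
qed

end
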